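(* Let $\beta=(\beta_{ij})_{i,j\ge 0,\ i+j\le 6}$ be a real sequence such that $\mathcal M(3)(\beta)$ is positive semidefinite, $\mathcal M(2)(\beta)$ is positive definite, and $\operatorname{rank}\mathcal M(3)=\operatorname{card}\mathcal V=7$, where $\mathcal V$ is the algebraic variety of $\mathcal M(3)$. Suppose the columns $\mathcal B_2=\{1,X,Y,X^2,XY,Y^2,X^2Y\}$ form a basis of the column space of $\mathcal M(3)$. Then $\beta$ admits a representing measure if and only if $\mathcal M(3)$ is weakly consistent.
   Context: The moment matrix $\mathcal M(3)(\beta)$ has rows and columns indexed by $1,X,Y,X^2,XY,Y^2,X^3,X^2Y,XY^2,Y^3$ in this order, with entry $\beta_{i+k,j+l}$ in row $X^iY^j$ and column $X^kY^l$; $\mathcal M(2)(\beta)$ is its principal submatrix indexed by monomials of degree $\le 2$. For $p(x,y)=\sum a_{ij}x^iy^j$ of degree $\le 3$, $p(X,Y)=\sum a_{ij}X^iY^j$ is the corresponding linear combination of columns. The algebraic variety is $\mathcal V=\bigcap\{\mathcal Z(p):\deg p\le 3,\ p(X,Y)=\mathbf 0\}$ with $\mathcal Z(p)$ the real zero set of $p$. A representing measure is a positive Borel measure $\mu$ on $\mathbb R^2$ with $\beta_{ij}=\int x^iy^j\,d\mu$ for $i+j\le 6$. $\mathcal M(3)$ is weakly consistent if every polynomial $p$ of degree $\le 3$ vanishing on $\mathcal V$ satisfies $p(X,Y)=\mathbf 0$. *)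

theory Defs
  imports "HOL-Probability.Probability"
begin

text \<open>Monomials of degree at most 3, in the order 1,X,Y,X^2,XY,Y^2,X^3,X^2Y,XY^2,Y^3;
  a monomial X^i Y^j is represented by its exponent pair (i,j).\<close>
definition mons :: "(nat \<times> nat) list" where
  "mons = [(0,0),(1,0),(0,1),(2,0),(1,1),(0,2),(3,0),(2,1),(1,2),(0,3)]"

definition M3 :: "(nat \<Rightarrow> nat \<Rightarrow> real) \<Rightarrow> nat \<Rightarrow> nat \<Rightarrow> real" where
  "M3 \<beta> r c = \<beta> (fst (mons ! r) + fst (mons ! c)) (snd (mons ! r) + snd (mons ! c))"

definition psd :: "nat \<Rightarrow> (nat \<Rightarrow> nat \<Rightarrow> real) \<Rightarrow> bool" where
  "psd n A \<longleftrightarrow> (\<forall>v::nat \<Rightarrow> real. (\<Sum>r<n. \<Sum>c<n. v r * A r c * v c) \<ge> 0)"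

definition pd :: "nat \<Rightarrow> (nat \<Rightarrow> nat \<Rightarrow> real) \<Rightarrow> bool" where
  "pd n A \<longleftrightarrow> (\<forall>v::nat \<Rightarrow> real. (\<exists>r<n. v r \<noteq> 0) \<longrightarrow> (\<Sum>r<n. \<Sum>c<n. v r * A r c * v c) > 0)"

text \<open>M(2) is the principal 6x6 submatrix (indices 0..5).\<close>
definition M2 :: "(nat \<Rightarrow> nat \<Rightarrow> real) \<Rightarrow> nat \<Rightarrow> nat \<Rightarrow> real" where
  "M2 \<beta> = M3 \<beta>"

definition cols_indep :: "nat \<Rightarrow> (nat \<Rightarrow> nat \<Rightarrow> real) \<Rightarrow> nat set \<Rightarrow> bool" where
  "cols_indep n A S \<longleftrightarrow> (\<forall>a::nat \<Rightarrow> real. (\<forall>r<n. (\<Sum>k\<in>S. a k * A r k) = 0) \<longrightarrow> (\<forall>k\<in>S. a k = 0))"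

definition col_in_span :: "nat \<Rightarrow> (nat \<Rightarrow> nat \<Rightarrow> real) \<Rightarrow> nat set \<Rightarrow> nat \<Rightarrow> bool" where
  "col_in_span n A S j \<longleftrightarrow> (\<exists>a::nat \<Rightarrow> real. \<forall>r<n. A r j = (\<Sum>k\<in>S. a k * A r k))"

definition cols_basis :: "nat \<Rightarrow> (nat \<Rightarrow> nat \<Rightarrow> real) \<Rightarrow> nat set \<Rightarrow> bool" where
  "cols_basis n A S \<longleftrightarrow> S \<subseteq> {..<n} \<and> cols_indep n A S \<and> (\<forall>j<n. col_in_span n A S j)"

definition mrank :: "nat \<Rightarrow> (nat \<Rightarrow> nat \<Rightarrow> real) \<Rightarrow> nat" where
  "mrank n A = Max {card S | S. S \<subseteq> {..<n} \<and> cols_indep n A S}"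

definition peval :: "(nat \<Rightarrow> real) \<Rightarrow> real \<times> real \<Rightarrow> real" where
  "peval a p = (\<Sum>k<10. a k * fst p ^ fst (mons ! k) * snd p ^ snd (mons ! k))"

text \<open>p(X,Y) = 0: the corresponding linear combination of columns of M(3) vanishes.\<close>
definition pXY_zero :: "(nat \<Rightarrow> nat \<Rightarrow> real) \<Rightarrow> (nat \<Rightarrow> real) \<Rightarrow> bool" where
  "pXY_zero \<beta> a \<longleftrightarrow> (\<forall>r<10. (\<Sum>k<10. a k * M3 \<beta> r k) = 0)"

definition variety :: "(nat \<Rightarrow> nat \<Rightarrow> real) \<Rightarrow> (real \<times> real) set" where
  "variety \<beta> = (\<Inter> {{p. peval a p = 0} | a. pXY_zero \<beta> a})"

definition weakly_consistent :: "(nat \<Rightarrow> nat \<Rightarrow> real) \<Rightarrow> bool" where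
  "weakly_consistent \<beta> \<longleftrightarrow> (\<forall>a. (\<forall>p\<in>variety \<beta>. peval a p = 0) \<longrightarrow> pXY_zero \<beta> a)"

definition has_rep_measure :: "(nat \<Rightarrow> nat \<Rightarrow> real) \<Rightarrow> bool" where
  "has_rep_measure \<beta> \<longleftrightarrow> (\<exists>\<mu> :: (real \<times> real) measure. sets \<mu> = sets borel \<and>
     (\<forall>i j. i + j \<le> 6 \<longrightarrow> integrable \<mu> (\<lambda>(x,y). x ^ i * y ^ j) \<and>
        (\<integral>(x,y). x ^ i * y ^ j \<partial>\<mu>) = \<beta> i j))"

end

theory Submission
  imports Defs
begin

text \<open>
  Necessity: a representing measure integrates the square of every kernel polynomial to
  \<open>b\<^sup>T M(3) b = 0\<close>, so it is carried by the variety \<open>V\<close>; every column combination \<open>p(X,Y)\<close>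
  is a vector of moments of \<open>p\<close> times monomials and therefore vanishes when \<open>p\<close> vanishes on \<open>V\<close>.

  Sufficiency: weak consistency makes evaluation on the seven points of \<open>V\<close> injective on the
  span of the seven basis monomials, hence bijective; Lagrange interpolation then writes the
  Riesz functional \<open>p \<mapsto> \<Sum> a\<^sub>k \<beta>\<^sub>k\<close>, which kills the kernel, as \<open>\<Sum>\<^sub>q p(q) w\<^sub>q\<close>, so the atomic
  measure \<open>\<Sum> w\<^sub>q \<delta>\<^sub>q\<close> has the right moments up to degree 3, and \<open>w\<^sub>q \<ge> 0\<close> by positivity of \<open>M(3)\<close>.
  The kernel relations \<open>X\<^sup>3, XY\<^sup>2, Y\<^sup>3 \<equiv> c\<^sub>6 X\<^sup>2Y, c\<^sub>8 X\<^sup>2Y, c\<^sub>9 X\<^sup>2Y\<close> modulo lower terms propagate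
  the moment identities to degrees 4, 5, 6, except when \<open>c\<^sub>6c\<^sub>8 = 1\<close> and \<open>c\<^sub>8 = c\<^sub>9c\<^sub>6\<close>. In that
  degenerate case every kernel polynomial has its cubic part vanishing at \<open>(c\<^sub>6, 1)\<close>; the signed
  measure on \<open>V\<close> representing this cubic part places three points of \<open>V\<close> on a line of direction
  \<open>(c\<^sub>6, 1)\<close>, along which kernel polynomials are quadratic, so the whole line lies in \<open>V\<close>: impossible.
\<close>

lemma sum_lessThan_10:
  "(\<Sum>k<10. f k) = f 0 + f 1 + f 2 + f 3 + f 4 + f 5 + f 6 + f 7 + f 8 + f 9"
  for f :: "nat \<Rightarrow> real"
  by (simp add: eval_nat_numeral add.commute add.left_commute)

lemma mons_nth:
  "mons ! 0 = (0,0)" "mons ! Suc 0 = (1,0)" "mons ! 1 = (1,0)" "mons ! 2 = (0,1)"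
  "mons ! 3 = (2,0)" "mons ! 4 = (1,1)" "mons ! 5 = (0,2)" "mons ! 6 = (3,0)"
  "mons ! 7 = (2,1)" "mons ! 8 = (1,2)" "mons ! 9 = (0,3)"
  by (simp_all add: mons_def)

lemma mons_degree_le: "k < 10 \<Longrightarrow> fst (mons ! k) + snd (mons ! k) \<le> 3"
  by (auto simp: eval_nat_numeral less_Suc_eq mons_def)

lemma mons_exhaust:
  assumes "u + v \<le> 3"
  obtains k where "k < 10" "mons ! k = (u, v)"
proof -
  have "u \<in> {0,1,2,3}" "v \<in> {0,1,2,3}"
    using assms by auto
  then have "(u, v) \<in> set mons"
    using assms by (simp add: mons_def) (elim disjE; simp)
  then obtain k where "k < length mons" "mons ! k = (u, v)"
    by (auto simp: in_set_conv_nth)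
  moreover have "length mons = 10" by (simp add: mons_def)
  ultimately show ?thesis
    using that by metis
qed

definition mon :: "nat \<Rightarrow> real \<times> real \<Rightarrow> real" where
  "mon k p = fst p ^ fst (mons ! k) * snd p ^ snd (mons ! k)"

lemma peval_eq_sum_mon: "peval a p = (\<Sum>k<10. a k * mon k p)"
  by (simp add: peval_def mon_def mult.assoc)

lemma peval_explicit:
  "peval a (x, y) = a 0 + a 1 * x + a 2 * y + a 3 * x\<^sup>2 + a 4 * x * y + a 5 * y\<^sup>2
     + a 6 * x ^ 3 + a 7 * x\<^sup>2 * y + a 8 * x * y\<^sup>2 + a 9 * y ^ 3"
  by (simp add: peval_eq_sum_mon sum_lessThan_10 mon_def mons_nth mult.assoc)

lemma mon_mult:
  "mon r p * mon s p = fst p ^ (fst (mons ! r) + fst (mons ! s)) * snd p ^ (snd (mons ! r) + snd (mons ! s))"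
  by (simp add: mon_def power_add algebra_simps)

lemma M3_commute: "M3 \<beta> r s = M3 \<beta> s r"
  by (simp add: M3_def add.commute)

lemma pXY_zero_diff:
  "pXY_zero \<beta> a \<Longrightarrow> pXY_zero \<beta> b \<Longrightarrow> pXY_zero \<beta> (\<lambda>k. a k - b k)"
  by (simp add: pXY_zero_def left_diff_distrib sum_subtractf)

lemma pXY_zero_sum:
  assumes "\<forall>j\<in>J. pXY_zero \<beta> (l j)"
  shows "pXY_zero \<beta> (\<lambda>k. \<Sum>j\<in>J. c j * l j k)"
  unfolding pXY_zero_def
proof (intro allI impI)
  fix r :: nat assume "r < 10"
  have "(\<Sum>k<10. (\<Sum>j\<in>J. c j * l j k) * M3 \<beta> r k) = (\<Sum>j\<in>J. c j * (\<Sum>k<10. l j k * M3 \<beta> r k))"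
    by (simp add: sum_distrib_left sum_distrib_right mult.assoc sum.swap[of _ J])
  also have "\<dots> = 0"
    using assms \<open>r < 10\<close> by (simp add: pXY_zero_def)
  finally show "(\<Sum>k<10. (\<Sum>j\<in>J. c j * l j k) * M3 \<beta> r k) = 0" .
qed

lemma sum_unit_mult: "finite A \<Longrightarrow> k \<in> A \<Longrightarrow> (\<Sum>i\<in>A. (if i = k then 1 else 0) * f i) = (f k :: real)"
  by (simp add: if_distrib[of "\<lambda>x. x * _"] cong: if_cong)

lemma peval_eq_0_if_in_variety: "pXY_zero \<beta> b \<Longrightarrow> p \<in> variety \<beta> \<Longrightarrow> peval b p = 0"
  unfolding variety_def by blast

locale column_basis =
  fixes \<beta> :: "nat \<Rightarrow> nat \<Rightarrow> real" and S :: "nat set"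
  assumes basis: "cols_basis 10 (M3 \<beta>) S"
begin

lemma basis_subset: "S \<subseteq> {..<10}"
  using basis by (simp add: cols_basis_def)

definition coef :: "nat \<Rightarrow> nat \<Rightarrow> real" where
  "coef j = (SOME a. \<forall>r<10. M3 \<beta> r j = (\<Sum>k\<in>S. a k * M3 \<beta> r k))"

lemma column_expansion:
  assumes "j < 10" "r < 10"
  shows "M3 \<beta> r j = (\<Sum>k\<in>S. coef j k * M3 \<beta> r k)"
proof -
  have "\<exists>a. \<forall>r<10. M3 \<beta> r j = (\<Sum>k\<in>S. a k * M3 \<beta> r k)"
    using basis assms(1) by (simp add: cols_basis_def col_in_span_def)
  from someI_ex[OF this] show ?thesis
    using assms(2) unfolding coef_def by blast
qed

definition kernel_gen :: "nat \<Rightarrow> nat \<Rightarrow> real" where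
  "kernel_gen j k = (if k = j then 1 else if k \<in> S then - coef j k else 0)"

lemma kernel_gen_nonbasic: "j \<notin> S \<Longrightarrow> i \<notin> S \<Longrightarrow> kernel_gen j i = (if i = j then 1 else 0)"
  by (simp add: kernel_gen_def)

lemma pXY_zero_kernel_gen:
  assumes "j \<in> {..<10} - S"
  shows "pXY_zero \<beta> (kernel_gen j)"
  unfolding pXY_zero_def
proof (intro allI impI)
  fix r :: nat assume "r < 10"
  have "kernel_gen j k * M3 \<beta> r k
      = (if k = j then M3 \<beta> r j else 0) - (if k \<in> S then coef j k * M3 \<beta> r k else 0)" for k
    using assms by (simp add: kernel_gen_def)
  then have "(\<Sum>k<10. kernel_gen j k * M3 \<beta> r k) = M3 \<beta> r j - (\<Sum>k\<in>S. coef j k * M3 \<beta> r k)"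
    using assms basis_subset
    by (simp add: sum_subtractf sum.inter_restrict[symmetric] Int_absorb1)
  also have "\<dots> = 0"
    using column_expansion assms \<open>r < 10\<close> by simp
  finally show "(\<Sum>k<10. kernel_gen j k * M3 \<beta> r k) = 0" .
qed

lemma kernel_expansion:
  assumes c: "pXY_zero \<beta> c" and "k < 10"
  shows "c k = (\<Sum>j\<in>{..<10} - S. c j * kernel_gen j k)"
proof -
  define d where "d k = c k - (\<Sum>j\<in>{..<10} - S. c j * kernel_gen j k)" for k
  have "pXY_zero \<beta> d"
    unfolding d_def using c pXY_zero_kernel_gen
    by (intro pXY_zero_diff pXY_zero_sum) auto
  have d_nonbasic: "d i = 0" if "i \<in> {..<10} - S" for i
    using that by (simp add: d_def kernel_gen_nonbasic if_distrib sum.delta cong: if_cong)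
  have "(\<Sum>k\<in>S. d k * M3 \<beta> r k) = 0" if "r < 10" for r
  proof -
    have "(\<Sum>k\<in>S. d k * M3 \<beta> r k) = (\<Sum>k<10. d k * M3 \<beta> r k)"
      using basis_subset d_nonbasic by (intro sum.mono_neutral_left) auto
    also have "\<dots> = 0"
      using \<open>pXY_zero \<beta> d\<close> that by (simp add: pXY_zero_def)
    finally show ?thesis .
  qed
  then have "\<forall>k\<in>S. d k = 0"
    using basis by (simp add: cols_basis_def cols_indep_def)
  then have "d k = 0"
    using d_nonbasic \<open>k < 10\<close> by blast
  then show ?thesis
    by (simp add: d_def)
qed

lemma peval_kernel:
  assumes "pXY_zero \<beta> c"
  shows "peval c p = (\<Sum>j\<in>{..<10} - S. c j * peval (kernel_gen j) p)"
proof -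
  have "peval c p = (\<Sum>k<10. (\<Sum>j\<in>{..<10} - S. c j * kernel_gen j k) * mon k p)"
    unfolding peval_eq_sum_mon using kernel_expansion[OF assms] by (intro sum.cong) auto
  then show ?thesis
    by (simp add: peval_eq_sum_mon sum_distrib_left sum_distrib_right mult.assoc sum.swap[of _ "{..<10} - S"])
qed

lemma variety_eq: "variety \<beta> = {p. \<forall>j\<in>{..<10} - S. peval (kernel_gen j) p = 0}"
proof
  show "variety \<beta> \<subseteq> {p. \<forall>j\<in>{..<10} - S. peval (kernel_gen j) p = 0}"
    unfolding variety_def using pXY_zero_kernel_gen by blast
  show "{p. \<forall>j\<in>{..<10} - S. peval (kernel_gen j) p = 0} \<subseteq> variety \<beta>"
    unfolding variety_def using peval_kernel by auto
qed

end

context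
  fixes \<beta> :: "nat \<Rightarrow> nat \<Rightarrow> real" and \<mu> :: "(real \<times> real) measure"
  assumes moments: "\<forall>i j. i + j \<le> 6 \<longrightarrow> integrable \<mu> (\<lambda>(x, y). x ^ i * y ^ j) \<and>
    (\<integral>(x, y). x ^ i * y ^ j \<partial>\<mu>) = \<beta> i j"
begin

lemma integrable_mon_mult: "r < 10 \<Longrightarrow> s < 10 \<Longrightarrow> integrable \<mu> (\<lambda>p. mon r p * mon s p)"
  and integral_mon_mult: "r < 10 \<Longrightarrow> s < 10 \<Longrightarrow> (\<integral>p. mon r p * mon s p \<partial>\<mu>) = M3 \<beta> r s"
proof -
  assume "r < 10" "s < 10"
  then have "fst (mons ! r) + fst (mons ! s) + (snd (mons ! r) + snd (mons ! s)) \<le> 6"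
    using mons_degree_le[of r] mons_degree_le[of s] by linarith
  then show "integrable \<mu> (\<lambda>p. mon r p * mon s p)" "(\<integral>p. mon r p * mon s p \<partial>\<mu>) = M3 \<beta> r s"
    using moments by (simp_all add: mon_mult M3_def case_prod_unfold)
qed

lemma integrable_peval_mon: "r < 10 \<Longrightarrow> integrable \<mu> (\<lambda>p. peval a p * mon r p)"
  and integral_peval_mon: "r < 10 \<Longrightarrow> (\<integral>p. peval a p * mon r p \<partial>\<mu>) = (\<Sum>k<10. a k * M3 \<beta> r k)"
proof -
  assume r: "r < 10"
  have expand: "(\<lambda>p. peval a p * mon r p) = (\<lambda>p. \<Sum>k<10. a k * (mon k p * mon r p))"
    by (simp add: peval_eq_sum_mon sum_distrib_right mult.assoc)
  show "integrable \<mu> (\<lambda>p. peval a p * mon r p)"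
    unfolding expand using r
    by (intro Bochner_Integration.integrable_sum integrable_mult_right integrable_mon_mult) auto
  show "(\<integral>p. peval a p * mon r p \<partial>\<mu>) = (\<Sum>k<10. a k * M3 \<beta> r k)"
    unfolding expand using r
    by (simp add: integrable_mon_mult integral_mon_mult M3_commute)
qed

text \<open>A kernel polynomial \<open>b\<close> satisfies \<open>\<integral> b\<^sup>2 d\<mu> = b\<^sup>T M(3) b = 0\<close>.\<close>

lemma AE_peval_kernel:
  assumes b: "pXY_zero \<beta> b"
  shows "AE p in \<mu>. peval b p = 0"
proof -
  have expand: "(\<lambda>p. (peval b p)\<^sup>2) = (\<lambda>p. \<Sum>r<10. b r * (peval b p * mon r p))"
    by (simp add: power2_eq_square peval_eq_sum_mon[of b] sum_distrib_left sum_distrib_right algebra_simps)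
  have "integrable \<mu> (\<lambda>p. (peval b p)\<^sup>2)"
    unfolding expand by (intro Bochner_Integration.integrable_sum integrable_mult_right integrable_peval_mon) auto
  moreover have "(\<integral>p. (peval b p)\<^sup>2 \<partial>\<mu>) = 0"
    unfolding expand using b by (simp add: integrable_peval_mon integral_peval_mon pXY_zero_def)
  ultimately have "AE p in \<mu>. (peval b p)\<^sup>2 = 0"
    by (simp add: integral_nonneg_eq_0_iff_AE)
  then show ?thesis
    by simp
qed

end

lemma (in column_basis) weakly_consistent_if_has_rep_measure:
  assumes "has_rep_measure \<beta>"
  shows "weakly_consistent \<beta>"
  unfolding weakly_consistent_def pXY_zero_def
proof (intro allI impI)
  obtain \<mu> :: "(real \<times> real) measure" where moments: "\<forall>i j. i + j \<le> 6 \<longrightarrow>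
      integrable \<mu> (\<lambda>(x, y). x ^ i * y ^ j) \<and> (\<integral>(x, y). x ^ i * y ^ j \<partial>\<mu>) = \<beta> i j"
    using assms unfolding has_rep_measure_def by blast
  have "AE p in \<mu>. \<forall>j\<in>{..<10} - S. peval (kernel_gen j) p = 0"
    using AE_peval_kernel[OF moments pXY_zero_kernel_gen] by (simp add: AE_finite_all)
  then have supp: "AE p in \<mu>. p \<in> variety \<beta>"
    by (simp add: variety_eq)
  fix a r assume a: "\<forall>p\<in>variety \<beta>. peval a p = 0" and r: "r < (10::nat)"
  have "(\<Sum>k<10. a k * M3 \<beta> r k) = (\<integral>p. peval a p * mon r p \<partial>\<mu>)"
    using integral_peval_mon[OF moments r] by simp
  also have "\<dots> = (\<integral>p. 0 \<partial>\<mu>)"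
    using supp a integrable_peval_mon[OF moments r]
    by (intro integral_cong_AE) (auto elim!: eventually_mono)
  finally show "(\<Sum>k<10. a k * M3 \<beta> r k) = 0"
    by simp
qed

text \<open>The finite type \<open>'n\<close> only provides an index set for a square matrix.\<close>

lemma interpolation_exists:
  fixes e :: "'k \<Rightarrow> 'p \<Rightarrow> real" and S :: "'k set" and P :: "'p set"
  assumes "finite S" "finite P" "card S = CARD('n::finite)" "card P = CARD('n)"
    and unisolvent: "\<And>c. \<forall>p\<in>P. (\<Sum>k\<in>S. c k * e k p) = 0 \<Longrightarrow> \<forall>k\<in>S. c k = 0"
  shows "\<exists>c. \<forall>p\<in>P. (\<Sum>k\<in>S. c k * e k p) = f p"
proof -
  have "\<exists>bS :: 'n \<Rightarrow> 'k. bij_betw bS UNIV S" "\<exists>bP :: 'n \<Rightarrow> 'p. bij_betw bP UNIV P"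
    using assms(1-4) by (auto intro!: finite_same_card_bij)
  then obtain bS :: "'n \<Rightarrow> 'k" and bP :: "'n \<Rightarrow> 'p"
    where bS: "bij_betw bS UNIV S" and bP: "bij_betw bP UNIV P"
    by blast
  define A :: "real^'n^'n" where "A = (\<chi> i j. e (bS j) (bP i))"
  define coeffs :: "real^'n \<Rightarrow> 'k \<Rightarrow> real" where "coeffs x k = x $ inv_into UNIV bS k" for x k
  have coeffs_bS: "coeffs x (bS j) = x $ j" for x j
    using bS by (simp add: coeffs_def bij_betw_def)
  have eval: "(\<Sum>k\<in>S. coeffs x k * e k (bP i)) = (A *v x) $ i" for x i
    using sum.reindex_bij_betw[OF bS, of "\<lambda>k. coeffs x k * e k (bP i)"]
    by (simp add: A_def matrix_vector_mult_def coeffs_bS mult.commute)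
  have "x = 0" if "A *v x = 0" for x
  proof -
    have "\<forall>p\<in>P. (\<Sum>k\<in>S. coeffs x k * e k p) = 0"
      using bP that eval by (auto simp: bij_betw_def)
    then have "\<forall>k\<in>S. coeffs x k = 0"
      by (rule unisolvent)
    then show "x = 0"
      using bS unfolding vec_eq_iff by (metis bij_betwE coeffs_bS UNIV_I zero_index)
  qed
  then have "surj (\<lambda>x. A *v x)"
    using matrix_left_invertible_ker matrix_left_right_inverse matrix_right_invertible_surjective
    by metis
  then obtain x where x: "A *v x = (\<chi> i. f (bP i))"
    by (metis surjD)
  have "\<forall>p\<in>P. (\<Sum>k\<in>S. coeffs x k * e k p) = f p"
    using bP eval x by (auto simp: bij_betw_def)
  then show ?thesis
    by blast
qed

definition cubic_at :: "real \<Rightarrow> nat \<Rightarrow> real" where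
  "cubic_at t k = (if fst (mons ! k) + snd (mons ! k) = 3 then t ^ fst (mons ! k) else 0)"

text \<open>\<open>\<Sum>k<10. a k * cubic_at t k\<close> is the cubic part of \<open>a\<close> evaluated at \<open>(t, 1)\<close>, which is
  the leading coefficient of \<open>a\<close> along any line of direction \<open>(t, 1)\<close>.\<close>

lemma sum_cubic_at: "(\<Sum>k<10. a k * cubic_at t k) = a 6 * t ^ 3 + a 7 * t\<^sup>2 + a 8 * t + a 9"
  by (simp add: sum_lessThan_10 cubic_at_def mons_nth)

lemma peval_on_line:
  "\<exists>e0 e1 e2. \<forall>s. peval a (t * s + c, s) = e0 + e1 * s + e2 * s\<^sup>2 + (\<Sum>k<10. a k * cubic_at t k) * s ^ 3"
proof (intro exI allI)
  fix s
  show "peval a (t * s + c, s)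
    = (a 0 + a 1 * c + a 3 * c\<^sup>2 + a 6 * c ^ 3)
    + (a 1 * t + a 2 + 2 * a 3 * t * c + a 4 * c + 3 * a 6 * t * c\<^sup>2 + a 7 * c\<^sup>2) * s
    + (a 3 * t\<^sup>2 + a 4 * t + a 5 + 3 * a 6 * t\<^sup>2 * c + 2 * a 7 * t * c + a 8 * c) * s\<^sup>2
    + (\<Sum>k<10. a k * cubic_at t k) * s ^ 3"
    unfolding peval_explicit sum_cubic_at by algebra
qed

lemma quadratic_eq_0_if_three_roots:
  fixes e0 e1 e2 :: real
  assumes "\<forall>s\<in>{a, b, c}. e0 + e1 * s + e2 * s\<^sup>2 = 0" and "a \<noteq> b" "a \<noteq> c" "b \<noteq> c"
  shows "e0 = 0 \<and> e1 = 0 \<and> e2 = 0"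
proof -
  have "(a - b) * (e1 + e2 * (a + b)) = 0" "(a - c) * (e1 + e2 * (a + c)) = 0"
    using assms(1) by (simp_all add: algebra_simps power2_eq_square)
  with assms(2,3) have ab: "e1 + e2 * (a + b) = 0" and "e1 + e2 * (a + c) = 0"
    by simp_all
  then have "e2 * (b - c) = 0"
    by algebra
  with assms(4) have "e2 = 0"
    by simp
  moreover from ab this have "e1 = 0"
    by simp
  ultimately show ?thesis
    using assms(1) by auto
qed

lemma exists_other_nonzero:
  fixes f :: "'a \<Rightarrow> 'b::comm_monoid_add"
  assumes "finite A" "a \<in> A" "sum f A = 0" "f a \<noteq> 0"
  shows "\<exists>b\<in>A. b \<noteq> a \<and> f b \<noteq> 0"
proof (rule ccontr)
  assume "\<not> ?thesis"
  then have "sum f (A - {a}) = 0"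
    by (intro sum.neutral) auto
  then have "sum f A = f a"
    using sum.remove[OF assms(1,2), of f] by simp
  with assms(3,4) show False
    by simp
qed

text \<open>The indices of the columns \<open>1, X, Y, X\<^sup>2, XY, Y\<^sup>2, X\<^sup>2Y\<close>, the basis \<open>\<B>\<^sub>2\<close> of the paper.\<close>

abbreviation B2 :: "nat set" where
  "B2 \<equiv> {0, 1, 2, 3, 4, 5, 7}"

locale B2_weakly_consistent = column_basis \<beta> B2 for \<beta> +
  assumes weakly_consistent: "weakly_consistent \<beta>"
    and finite_variety: "finite (variety \<beta>)"
    and card_variety: "card (variety \<beta>) = 7"
begin

lemma nonbasic_B2: "{..<10} - B2 = {6, 8, 9}"
  by (auto simp: eval_nat_numeral less_Suc_eq)

lemma pXY_zero_if_vanishes: "\<forall>p\<in>variety \<beta>. peval a p = 0 \<Longrightarrow> pXY_zero \<beta> a"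
  using weakly_consistent by (simp add: weakly_consistent_def)

lemma peval_supported_B2:
  assumes "\<forall>k. k \<notin> B2 \<longrightarrow> c k = 0"
  shows "peval c p = (\<Sum>k\<in>B2. c k * mon k p)"
  unfolding peval_eq_sum_mon using assms basis_subset
  by (intro sum.mono_neutral_right) auto

lemma exists_interpolant:
  "\<exists>c. (\<forall>k. k \<notin> B2 \<longrightarrow> c k = 0) \<and> (\<forall>p\<in>variety \<beta>. peval c p = f p)"
proof -
  have unisolvent: "\<forall>k\<in>B2. c k = 0"
    if "\<forall>p\<in>variety \<beta>. (\<Sum>k\<in>B2. c k * mon k p) = 0" for c
  proof -
    define c' where "c' k = (if k \<in> B2 then c k else 0)" for k
    have "peval c' p = (\<Sum>k\<in>B2. c k * mon k p)" for p
      by (subst peval_supported_B2) (simp_all add: c'_def)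
    then have "pXY_zero \<beta> c'"
      using that by (intro pXY_zero_if_vanishes) simp
    then have "c' k = 0" if "k \<in> B2" for k
      using kernel_expansion[of c' k] that basis_subset by (auto simp: nonbasic_B2 c'_def)
    then show ?thesis
      by (simp add: c'_def)
  qed
  obtain c where c: "\<forall>p\<in>variety \<beta>. (\<Sum>k\<in>B2. c k * mon k p) = f p"
    using interpolation_exists[where 'n = 7, OF _ finite_variety _ _ unisolvent] card_variety
    by fastforce
  define c' where "c' k = (if k \<in> B2 then c k else 0)" for k
  have "peval c' p = (\<Sum>k\<in>B2. c k * mon k p)" for p
    by (subst peval_supported_B2) (simp_all add: c'_def)
  then show ?thesis
    using c by (intro exI[of _ c']) (simp add: c'_def)
qed

definition lagrange :: "real \<times> real \<Rightarrow> nat \<Rightarrow> real" where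
  "lagrange q = (SOME c. (\<forall>k. k \<notin> B2 \<longrightarrow> c k = 0) \<and>
     (\<forall>p\<in>variety \<beta>. peval c p = (if p = q then 1 else 0)))"

lemma lagrange_nonbasic: "k \<notin> B2 \<Longrightarrow> lagrange q k = 0"
  and peval_lagrange: "p \<in> variety \<beta> \<Longrightarrow> peval (lagrange q) p = (if p = q then 1 else 0)"
  using someI_ex[OF exists_interpolant[of "\<lambda>p. if p = q then 1 else 0"]]
  unfolding lagrange_def by blast+

lemma kernel_decomposition:
  "pXY_zero \<beta> (\<lambda>k. a k - (\<Sum>q\<in>variety \<beta>. peval a q * lagrange q k))"
proof (rule pXY_zero_if_vanishes, intro ballI)
  fix p assume p: "p \<in> variety \<beta>"
  have "peval (\<lambda>k. a k - (\<Sum>q\<in>variety \<beta>. peval a q * lagrange q k)) p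
      = peval a p - (\<Sum>q\<in>variety \<beta>. peval a q * peval (lagrange q) p)"
    by (simp add: peval_eq_sum_mon algebra_simps sum_subtractf sum_distrib_left sum_distrib_right
        sum.swap[of _ "variety \<beta>"])
  also have "\<dots> = 0"
    using p finite_variety by (simp add: peval_lagrange if_distrib sum.delta cong: if_cong)
  finally show "peval (\<lambda>k. a k - (\<Sum>q\<in>variety \<beta>. peval a q * lagrange q k)) p = 0" .
qed

lemma functional_eq_point_sum:
  assumes "\<And>b. pXY_zero \<beta> b \<Longrightarrow> (\<Sum>k<10. b k * g k) = 0"
  shows "(\<Sum>k<10. a k * g k) = (\<Sum>q\<in>variety \<beta>. peval a q * (\<Sum>k<10. lagrange q k * g k))"
proof -
  have "0 = (\<Sum>k<10. (a k - (\<Sum>q\<in>variety \<beta>. peval a q * lagrange q k)) * g k)"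
    using assms[OF kernel_decomposition] by simp
  then show ?thesis
    by (simp add: algebra_simps sum_subtractf sum_distrib_left sum_distrib_right sum.swap[of _ "variety \<beta>"])
qed

lemma eq_0_if_orthogonal_B2:
  assumes "\<forall>k\<in>B2. (\<Sum>p\<in>variety \<beta>. z p * mon k p) = 0" and "q \<in> variety \<beta>"
  shows "z q = 0"
proof -
  have "z q = (\<Sum>p\<in>variety \<beta>. z p * peval (lagrange q) p)"
    using assms(2) finite_variety by (simp add: peval_lagrange if_distrib sum.delta cong: if_cong)
  also have "\<dots> = (\<Sum>k<10. lagrange q k * (\<Sum>p\<in>variety \<beta>. z p * mon k p))"
    by (simp add: peval_eq_sum_mon sum_distrib_left sum_distrib_right algebra_simps sum.swap[of _ "variety \<beta>"])
  also have "\<dots> = 0"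
    using assms(1) lagrange_nonbasic by (intro sum.neutral) (metis mult_eq_0_iff)
  finally show ?thesis .
qed

definition weight :: "real \<times> real \<Rightarrow> real" where
  "weight q = (\<Sum>k<10. lagrange q k * \<beta> (fst (mons ! k)) (snd (mons ! k)))"

lemma riesz_eq_weighted_sum:
  "(\<Sum>k<10. a k * \<beta> (fst (mons ! k)) (snd (mons ! k))) = (\<Sum>q\<in>variety \<beta>. peval a q * weight q)"
  unfolding weight_def
proof (rule functional_eq_point_sum)
  fix b assume "pXY_zero \<beta> b"
  then have "(\<Sum>k<10. b k * M3 \<beta> 0 k) = 0"
    by (simp add: pXY_zero_def)
  then show "(\<Sum>k<10. b k * \<beta> (fst (mons ! k)) (snd (mons ! k))) = 0"
    by (simp add: M3_def mons_nth)
qed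

definition defect :: "nat \<Rightarrow> nat \<Rightarrow> real" where
  "defect i j = \<beta> i j - (\<Sum>q\<in>variety \<beta>. weight q * fst q ^ i * snd q ^ j)"

lemma defect_low_degree:
  assumes "i + j \<le> 3"
  shows "defect i j = 0"
proof -
  obtain k where k: "k < 10" "mons ! k = (i, j)"
    using mons_exhaust[OF assms] .
  have "peval (\<lambda>k'. if k' = k then 1 else 0) q = mon k q" for q
    using k(1) by (simp add: peval_eq_sum_mon sum_unit_mult)
  then show ?thesis
    using riesz_eq_weighted_sum[of "\<lambda>k'. if k' = k then 1 else 0"] k
    by (simp add: defect_def mon_def sum_unit_mult ac_simps)
qed

lemma defect_kernel:
  assumes b: "pXY_zero \<beta> b" and "u + v \<le> 3"
  shows "(\<Sum>k<10. b k * defect (fst (mons ! k) + u) (snd (mons ! k) + v)) = 0"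
proof -
  obtain r where r: "r < 10" "mons ! r = (u, v)"
    using mons_exhaust[OF assms(2)] .
  have "(\<Sum>k<10. b k * M3 \<beta> r k) = 0"
    using b r(1) by (simp add: pXY_zero_def)
  then have "(\<Sum>k<10. b k * \<beta> (fst (mons ! k) + u) (snd (mons ! k) + v)) = 0"
    using r(2) by (simp add: M3_def add.commute)
  moreover have "(\<Sum>k<10. b k * (\<Sum>q\<in>variety \<beta>. weight q * fst q ^ (fst (mons ! k) + u) * snd q ^ (snd (mons ! k) + v)))
      = (\<Sum>q\<in>variety \<beta>. weight q * fst q ^ u * snd q ^ v * peval b q)"
    by (simp add: peval_eq_sum_mon mon_def power_add sum_distrib_left sum_distrib_right
        sum.swap[of _ "variety \<beta>"] algebra_simps)
  moreover have "(\<Sum>q\<in>variety \<beta>. weight q * fst q ^ u * snd q ^ v * peval b q) = 0"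
    using peval_eq_0_if_in_variety[OF b] by simp
  ultimately show ?thesis
    by (simp add: defect_def right_diff_distrib sum_subtractf)
qed

text \<open>\<open>X\<^sup>2Y\<close> is the only cubic basis column, so in the kernel relation of a non-basic cubic
  column, shifted by \<open>X\<^sup>uY\<^sup>v\<close>, every other basis term has lower degree.\<close>

lemma defect_shift:
  assumes j: "j \<in> {6, 8, 9}" and "u + v \<le> 3"
    and lower: "\<And>i j. i + j < u + v + 3 \<Longrightarrow> defect i j = 0"
  shows "defect (fst (mons ! j) + u) (snd (mons ! j) + v) = coef j 7 * defect (u + 2) (v + 1)"
proof -
  have "j \<in> {..<10} - B2"
    using j by auto
  from defect_kernel[OF pXY_zero_kernel_gen[OF this] assms(2)] j show ?thesis
    unfolding kernel_gen_def by (auto simp: sum_lessThan_10 mons_nth lower add.commute)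
qed

abbreviation nondegenerate :: bool where
  "nondegenerate \<equiv> \<not> (coef 6 7 * coef 8 7 = 1 \<and> coef 8 7 = coef 9 7 * coef 6 7)"

lemma defect_propagate:
  assumes "n \<le> 6" and lower: "\<And>i j. i + j < n \<Longrightarrow> defect i j = 0"
    and "defect 2 (n - 2) = 0" and "2 \<le> k" "k + b = n"
  shows "defect k b = 0"
  using \<open>2 \<le> k\<close> \<open>k + b = n\<close>
proof (induction k arbitrary: b rule: nat_induct_at_least)
  case base
  then have "b = n - 2"
    by simp
  then show ?case
    using \<open>defect 2 (n - 2) = 0\<close> by simp
next
  case (Suc k)
  obtain u where "k = u + 2"
    using Suc.hyps by (metis add.commute le_iff_add)
  then show ?case
    using defect_shift[of 6 u b] lower Suc.IH[of "Suc b"] Suc.prems \<open>n \<le> 6\<close>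
    by (simp add: mons_nth numeral_3_eq_3)
qed

text \<open>With \<open>x = defect 2 (n - 2)\<close> and \<open>y = defect 3 (n - 3)\<close> the shifted kernel relations give
  \<open>y = c\<^sub>6 x\<close>, \<open>x = c\<^sub>8 y\<close> and \<open>c\<^sub>8 x = defect 1 (n - 1) = c\<^sub>9 y\<close>; outside the degenerate case
  this forces \<open>x = 0\<close>.\<close>

lemma defect_homogeneous:
  assumes nondegenerate and "4 \<le> n" "n \<le> 6"
    and lower: "\<And>i j. i + j < n \<Longrightarrow> defect i j = 0"
    and "i + j = n"
  shows "defect i j = 0"
proof -
  obtain m where "n = m + 4"
    using \<open>4 \<le> n\<close> by (metis add.commute le_iff_add)
  then have n: "n = Suc (Suc (Suc (Suc m)))"
    by simp
  have shift: "defect (fst (mons ! l) + u) (snd (mons ! l) + v) = coef l 7 * defect (u + 2) (v + 1)"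
    if "l \<in> {6, 8, 9}" "u + v + 3 = n" for l u v
    using defect_shift[OF that(1)] lower that \<open>n \<le> 6\<close> by simp
  define x where "x = defect 2 (m + 2)"
  have y: "defect 3 (m + 1) = coef 6 7 * x" and z: "defect 1 (m + 3) = coef 8 7 * x"
    and z0: "defect 0 n = coef 9 7 * x"
    using shift[of 6 0 "m + 1"] shift[of 8 0 "m + 1"] shift[of 9 0 "m + 1"]
    by (simp_all add: x_def mons_nth n numeral_3_eq_3 numeral_2_eq_2)
  have "x = coef 8 7 * defect 3 (m + 1)" and "defect 1 (m + 3) = coef 9 7 * defect 3 (m + 1)"
    using shift[of 8 1 m] shift[of 9 1 m]
    by (simp_all add: x_def mons_nth n numeral_3_eq_3 numeral_2_eq_2)
  with y z have "x * (coef 6 7 * coef 8 7 - 1) = 0" "x * (coef 8 7 - coef 9 7 * coef 6 7) = 0"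
    by algebra+
  with \<open>nondegenerate\<close> have "x = 0"
    by auto
  then have "defect k b = 0" if "2 \<le> k" "k + b = n" for k b
    using defect_propagate[OF \<open>n \<le> 6\<close> lower _ that] by (simp add: x_def n)
  then show ?thesis
    using y z z0 \<open>x = 0\<close> \<open>i + j = n\<close> n
    by (cases "2 \<le> i") (auto simp: not_le less_Suc_eq numeral_2_eq_2 numeral_3_eq_3)
qed

lemma defect_eq_0_if_nondegenerate:
  assumes nondegenerate
  shows "i + j \<le> 6 \<Longrightarrow> defect i j = 0"
proof (induction "i + j" arbitrary: i j rule: less_induct)
  case less
  show ?case
  proof (cases "i + j \<le> 3")
    case True
    then show ?thesis by (rule defect_low_degree)
  next
    case False
    then have "4 \<le> i + j"
      by simp
    have lower: "defect a b = 0" if "a + b < i + j" for a b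
      using less.hyps[OF that] that less.prems by simp
    show ?thesis
      by (rule defect_homogeneous[OF assms \<open>4 \<le> i + j\<close> less.prems lower refl])
  qed
qed

lemma weight_nonneg:
  assumes "psd 10 (M3 \<beta>)" and no_defect: "\<And>i j. i + j \<le> 6 \<Longrightarrow> defect i j = 0"
    and q: "q \<in> variety \<beta>"
  shows "0 \<le> weight q"
proof -
  have M3_eq: "M3 \<beta> r c = (\<Sum>p\<in>variety \<beta>. weight p * (mon r p * mon c p))" if "r < 10" "c < 10" for r c
    using no_defect[of "fst (mons ! r) + fst (mons ! c)" "snd (mons ! r) + snd (mons ! c)"]
      mons_degree_le[OF that(1)] mons_degree_le[OF that(2)]
    by (simp add: M3_def defect_def mon_mult mult.assoc)
  have "0 \<le> (\<Sum>r<10. \<Sum>c<10. lagrange q r * M3 \<beta> r c * lagrange q c)"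
    using assms(1) unfolding psd_def by blast
  also have "\<dots> = (\<Sum>p\<in>variety \<beta>. weight p * (peval (lagrange q) p * peval (lagrange q) p))"
    by (simp add: M3_eq peval_eq_sum_mon sum_distrib_left sum_distrib_right algebra_simps
        sum.swap[of _ "variety \<beta>"])
  also have "\<dots> = weight q"
    using q finite_variety by (simp add: peval_lagrange if_distrib sum.delta cong: if_cong)
  finally show ?thesis .
qed

text \<open>The measure is \<open>\<Sum> weight q \<delta>\<^sub>q\<close>; \<open>point_measure\<close> lives on the power set of the variety, and
  \<open>distr\<close> moves it to the Borel sets.\<close>

lemma has_rep_measure_if_no_defect:
  assumes "psd 10 (M3 \<beta>)" and no_defect: "\<And>i j. i + j \<le> 6 \<Longrightarrow> defect i j = 0"
  shows "has_rep_measure \<beta>"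
proof -
  let ?\<nu> = "point_measure (variety \<beta>) (\<lambda>p. ennreal (weight p))"
  define \<mu> where "\<mu> = distr ?\<nu> borel (\<lambda>p. p)"
  have id_measurable: "(\<lambda>p. p) \<in> measurable ?\<nu> borel"
    by simp
  have "integrable \<mu> (\<lambda>(x, y). x ^ i * y ^ j) \<and> (\<integral>(x, y). x ^ i * y ^ j \<partial>\<mu>) = \<beta> i j"
    if "i + j \<le> 6" for i j
  proof
    have f: "(\<lambda>(x::real, y::real). x ^ i * y ^ j) \<in> borel_measurable borel"
      unfolding case_prod_unfold by (intro borel_measurable_continuous_onI continuous_intros)
    show "integrable \<mu> (\<lambda>(x, y). x ^ i * y ^ j)"
      unfolding \<mu>_def using integrable_distr_eq[OF id_measurable f]
        integrable_point_measure_finite[OF finite_variety] by simp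
    have "(\<integral>(x, y). x ^ i * y ^ j \<partial>\<mu>) = (\<integral>p. (case p of (x, y) \<Rightarrow> x ^ i * y ^ j) \<partial>?\<nu>)"
      unfolding \<mu>_def by (rule integral_distr[OF id_measurable f])
    also have "\<dots> = (\<Sum>p\<in>variety \<beta>. weight p *\<^sub>R (case p of (x, y) \<Rightarrow> x ^ i * y ^ j))"
      by (rule lebesgue_integral_point_measure_finite[OF finite_variety weight_nonneg[OF assms]])
    also have "\<dots> = \<beta> i j"
      using no_defect[OF that] by (simp add: defect_def case_prod_unfold mult.assoc)
    finally show "(\<integral>(x, y). x ^ i * y ^ j \<partial>\<mu>) = \<beta> i j" .
  qed
  moreover have "sets \<mu> = sets borel"
    by (simp add: \<mu>_def)
  ultimately show ?thesis
    unfolding has_rep_measure_def by blast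
qed

context
  assumes degenerate: "coef 6 7 * coef 8 7 = 1" "coef 8 7 = coef 9 7 * coef 6 7"
begin

text \<open>The cubic parts \<open>X\<^sup>3 - c\<^sub>6X\<^sup>2Y\<close>, \<open>XY\<^sup>2 - c\<^sub>8X\<^sup>2Y\<close>, \<open>Y\<^sup>3 - c\<^sub>9X\<^sup>2Y\<close> of the kernel generators all
  vanish at \<open>(c\<^sub>6, 1)\<close> exactly in the degenerate case.\<close>

lemma cubic_at_kernel:
  assumes b: "pXY_zero \<beta> b"
  shows "(\<Sum>k<10. b k * cubic_at (coef 6 7) k) = 0"
proof -
  have "b 7 = (\<Sum>j\<in>{6, 8, 9}. b j * kernel_gen j 7)"
    using kernel_expansion[OF b, of 7, unfolded nonbasic_B2] by simp
  then have "b 7 = - b 6 * coef 6 7 - b 8 * coef 8 7 - b 9 * coef 9 7"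
    unfolding kernel_gen_def by simp
  with degenerate show ?thesis
    unfolding sum_cubic_at by algebra
qed

definition mass :: "real \<times> real \<Rightarrow> real" where
  "mass q = (\<Sum>k<10. lagrange q k * cubic_at (coef 6 7) k)"

lemma mass_moment:
  assumes "u + v \<le> 3"
  shows "(\<Sum>q\<in>variety \<beta>. mass q * fst q ^ u * snd q ^ v) = (if u + v = 3 then coef 6 7 ^ u else 0)"
proof -
  obtain k where k: "k < 10" "mons ! k = (u, v)"
    using mons_exhaust[OF assms] .
  have "peval (\<lambda>k'. if k' = k then 1 else 0) q = mon k q" for q
    using k(1) by (simp add: peval_eq_sum_mon sum_unit_mult)
  then have "cubic_at (coef 6 7) k = (\<Sum>q\<in>variety \<beta>. mon k q * mass q)"
    using functional_eq_point_sum[OF cubic_at_kernel, of "\<lambda>k'. if k' = k then 1 else 0",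
        folded mass_def] k(1)
    by (simp add: sum_unit_mult)
  moreover have "fst (mons ! k) = u" "snd (mons ! k) = v"
    using k(2) by simp_all
  ultimately show ?thesis
    by (simp add: cubic_at_def mon_def ac_simps cong: if_cong)
qed

lemma mass_line_moment:
  assumes "u + v \<le> 2"
  shows "(\<Sum>p\<in>variety \<beta>. mass p * (fst p - coef 6 7 * snd p - c) * fst p ^ u * snd p ^ v) = 0"
proof -
  let ?V = "variety \<beta>"
  have "(\<Sum>p\<in>?V. mass p * (fst p - coef 6 7 * snd p - c) * fst p ^ u * snd p ^ v)
      = (\<Sum>p\<in>?V. mass p * fst p ^ Suc u * snd p ^ v)
        - coef 6 7 * (\<Sum>p\<in>?V. mass p * fst p ^ u * snd p ^ Suc v)
        - c * (\<Sum>p\<in>?V. mass p * fst p ^ u * snd p ^ v)"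
    by (simp add: algebra_simps sum_subtractf sum_distrib_left sum_distrib_right sum.distrib)
  also have "\<dots> = 0"
    using assms mass_moment[of "Suc u" v] mass_moment[of u "Suc v"] mass_moment[of u v] by simp
  finally show ?thesis .
qed

text \<open>Both \<open>mass\<close> and \<open>mass \<cdot> (x - c\<^sub>6y - c)\<close> annihilate the quadratic monomials, and only \<open>mass\<close>
  sees \<open>X\<^sup>2Y\<close>; as the basis monomials separate functions on the variety, the second is a multiple
  of the first.\<close>

lemma mass_line_proportional:
  obtains s where "\<forall>p\<in>variety \<beta>. coef 6 7 ^ 2 * (mass p * (fst p - coef 6 7 * snd p - c)) = s * mass p"
proof -
  let ?t = "coef 6 7" and ?V = "variety \<beta>"
  define \<nu> where "\<nu> p = mass p * (fst p - ?t * snd p - c)" for p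
  define s where "s = (\<Sum>p\<in>?V. \<nu> p * mon 7 p)"
  define z where "z p = ?t\<^sup>2 * \<nu> p - s * mass p" for p
  have "(\<Sum>p\<in>?V. z p * mon k p) = 0" if "k \<in> B2" for k
  proof -
    have split: "(\<Sum>p\<in>?V. z p * mon k p)
        = ?t\<^sup>2 * (\<Sum>p\<in>?V. \<nu> p * mon k p) - s * (\<Sum>p\<in>?V. mass p * mon k p)"
      by (simp add: z_def algebra_simps sum_subtractf sum_distrib_left sum_distrib_right)
    show ?thesis
    proof (cases "k = 7")
      case True
      then show ?thesis
        unfolding split using mass_moment[of 2 1] by (simp add: s_def mon_def mons_nth mult.assoc)
    next
      case False
      with \<open>k \<in> B2\<close> have "fst (mons ! k) + snd (mons ! k) \<le> 2"
        by (auto simp: mons_nth)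
      then show ?thesis
        unfolding split using mass_line_moment mass_moment by (simp add: \<nu>_def mon_def mult.assoc)
    qed
  qed
  then have "z p = 0" if "p \<in> ?V" for p
    using eq_0_if_orthogonal_B2 that by blast
  then show ?thesis
    using that[of s] by (simp add: z_def \<nu>_def)
qed

lemma mass_on_line:
  assumes q0: "q0 \<in> variety \<beta>" "mass q0 \<noteq> 0" and q: "q \<in> variety \<beta>" "mass q \<noteq> 0"
  shows "q = (coef 6 7 * snd q + (fst q0 - coef 6 7 * snd q0), snd q)"
proof -
  let ?t = "coef 6 7"
  obtain s where s: "\<forall>p\<in>variety \<beta>.
      ?t ^ 2 * (mass p * (fst p - ?t * snd p - (fst q0 - ?t * snd q0))) = s * mass p"
    by (rule mass_line_proportional)
  have "s * mass q0 = 0"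
    using bspec[OF s q0(1)] by simp
  with q0(2) have "s = 0"
    by simp
  moreover have "?t \<noteq> 0"
    using degenerate(1) by auto
  ultimately have "fst q - ?t * snd q = fst q0 - ?t * snd q0"
    using bspec[OF s q(1)] q(2) by simp
  then show ?thesis
    by (simp add: prod_eq_iff algebra_simps)
qed

lemma mass_support_three_ordinates:
  obtains q0 q1 q2 where "q0 \<in> variety \<beta>" "q1 \<in> variety \<beta>" "q2 \<in> variety \<beta>"
    and "mass q0 \<noteq> 0" "mass q1 \<noteq> 0" "mass q2 \<noteq> 0"
    and "snd q0 \<noteq> snd q1" "snd q0 \<noteq> snd q2" "snd q1 \<noteq> snd q2"
proof -
  let ?V = "variety \<beta>"
  have "(\<Sum>q\<in>?V. mass q * snd q ^ 3) = 1" "(\<Sum>q\<in>?V. mass q * snd q) = 0" "(\<Sum>q\<in>?V. mass q) = 0"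
    using mass_moment[of 0 3] mass_moment[of 0 1] mass_moment[of 0 0] by simp_all
  note moments = this
  obtain q0 where q0: "q0 \<in> ?V" "mass q0 \<noteq> 0"
    using moments(1) by (metis (no_types, lifting) mult_eq_0_iff sum.neutral zero_neq_one)
  obtain q1 where q1: "q1 \<in> ?V" "q1 \<noteq> q0" "mass q1 \<noteq> 0"
    using exists_other_nonzero[OF finite_variety q0(1) moments(3) q0(2)] by blast
  have y01: "snd q0 \<noteq> snd q1"
    using mass_on_line[OF q0 q0] mass_on_line[OF q0 q1(1,3)] q1(2) by metis
  define f where "f q = mass q * (snd q - snd q1)" for q
  have "sum f ?V = (\<Sum>q\<in>?V. mass q * snd q) - snd q1 * (\<Sum>q\<in>?V. mass q)"
    by (simp add: f_def algebra_simps sum_subtractf sum_distrib_left)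
  then have "sum f ?V = 0"
    using moments by simp
  moreover have "f q0 \<noteq> 0"
    using q0 y01 by (simp add: f_def)
  ultimately obtain q2 where q2: "q2 \<in> ?V" "q2 \<noteq> q0" "f q2 \<noteq> 0"
    using exists_other_nonzero[OF finite_variety q0(1)] by blast
  then have "mass q2 \<noteq> 0" "snd q1 \<noteq> snd q2"
    by (auto simp: f_def)
  moreover have "snd q0 \<noteq> snd q2"
    using mass_on_line[OF q0 q0] mass_on_line[OF q0 q2(1) \<open>mass q2 \<noteq> 0\<close>] q2(2) by metis
  ultimately show ?thesis
    using that q0 q1 q2 y01 by blast
qed

text \<open>Three points of the variety lie on a line of direction \<open>(c\<^sub>6, 1)\<close>. Every kernel polynomial
  restricted to that line is at most quadratic, so it vanishes on the whole line, which would make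
  the variety infinite.\<close>

lemma degenerate_impossible: False
proof -
  let ?t = "coef 6 7"
  obtain q0 q1 q2 where q: "q0 \<in> variety \<beta>" "q1 \<in> variety \<beta>" "q2 \<in> variety \<beta>"
    and mass: "mass q0 \<noteq> 0" "mass q1 \<noteq> 0" "mass q2 \<noteq> 0"
    and distinct: "snd q0 \<noteq> snd q1" "snd q0 \<noteq> snd q2" "snd q1 \<noteq> snd q2"
    by (rule mass_support_three_ordinates)
  define c where "c = fst q0 - ?t * snd q0"
  have on_variety: "\<forall>y\<in>{snd q0, snd q1, snd q2}. (?t * y + c, y) \<in> variety \<beta>"
    using mass_on_line[OF q(1) mass(1)] q mass unfolding c_def by (metis empty_iff insert_iff)
  have "(?t * s + c, s) \<in> variety \<beta>" for s
    unfolding variety_def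
  proof (intro InterI, safe)
    fix b assume b: "pXY_zero \<beta> b"
    obtain e0 e1 e2 where e: "\<And>s. peval b (?t * s + c, s) = e0 + e1 * s + e2 * s\<^sup>2"
      using peval_on_line[of b ?t c] cubic_at_kernel[OF b] by auto
    have "\<forall>y\<in>{snd q0, snd q1, snd q2}. e0 + e1 * y + e2 * y\<^sup>2 = 0"
      using on_variety peval_eq_0_if_in_variety[OF b] e by metis
    then have "e0 = 0 \<and> e1 = 0 \<and> e2 = 0"
      using quadratic_eq_0_if_three_roots distinct by blast
    then show "peval b (?t * s + c, s) = 0"
      using e[of s] by simp
  qed
  then have "range (\<lambda>s. (?t * s + c, s)) \<subseteq> variety \<beta>"
    by auto
  then have "finite (range (\<lambda>s::real. (?t * s + c, s)))"
    using finite_variety finite_subset by blast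
  moreover have "inj (\<lambda>s::real. (?t * s + c, s))"
    by (auto intro: injI)
  ultimately show False
    using finite_imageD infinite_UNIV_char_0 by blast
qed

end

lemma nondegenerate_B2: nondegenerate
  using degenerate_impossible by blast

end

theorem theorem4p3:
  fixes \<beta> :: "nat \<Rightarrow> nat \<Rightarrow> real"
  assumes "psd 10 (M3 \<beta>)"
    and "pd 6 (M2 \<beta>)"
    and "mrank 10 (M3 \<beta>) = 7"
    and "finite (variety \<beta>)" and "card (variety \<beta>) = 7"
    and "cols_basis 10 (M3 \<beta>) {0, 1, 2, 3, 4, 5, 7}"
  shows "has_rep_measure \<beta> \<longleftrightarrow> weakly_consistent \<beta>"
proof
  interpret column_basis \<beta> B2
    using assms(6) by unfold_locales
  show "weakly_consistent \<beta>" if "has_rep_measure \<beta>"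
    using that by (rule weakly_consistent_if_has_rep_measure)
next
  assume "weakly_consistent \<beta>"
  then interpret B2_weakly_consistent \<beta>
    using assms(4-6) by unfold_locales
  show "has_rep_measure \<beta>"
    using has_rep_measure_if_no_defect[OF assms(1) defect_eq_0_if_nondegenerate[OF nondegenerate_B2]] .
qed

end
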